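(* Fix a reflection matrix $\mathbf\Phi$ and let $(\{\mathbf W_k^{\star\star}\}_{k\in\mathcal K},\mathbf R_0^{\star\star})$ be an optimal solution of problem (SDR2.1). Define, for each $k\in\mathcal K$, $$\mathbf w_k^{\mathrm{opt,II}}=(\mathbf h_k^H\mathbf W_k^{\star\star}\mathbf h_k)^{-1/2}\,\mathbf W_k^{\star\star}\mathbf h_k,\qquad \mathbf R_0^{\mathrm{opt,II}}=\mathbf R_0^{\star\star}+\sum_{k\in\mathcal K}\mathbf W_k^{\star\star}-\sum_{k\in\mathcal K}\mathbf w_k^{\mathrm{opt,II}}(\mathbf w_k^{\mathrm{opt,II}})^H .$$ Then these are well defined, $\mathbf R_0^{\mathrm{opt,II}}\succeq\mathbf 0$, and $(\{\mathbf w_k^{\mathrm{opt,II}}\},\mathbf R_0^{\mathrm{opt,II}})$ is an optimal solution of problem (P2.1). In particular (P2.1) and (SDR2.1) have the same optimal value.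
   Context: Let $M,N,K\ge1$ be integers and $\mathcal K=\{1,\dots,K\}$. Fixed data: $\mathbf G\in\mathbb C^{N\times M}$, $\mathbf h_{\mathrm d,k}\in\mathbb C^{M}$ and $\mathbf h_{\mathrm r,k}\in\mathbb C^{N}$ for $k\in\mathcal K$, thresholds $\Gamma_k>0$, noise powers $\sigma_k^2>0$, and a power budget $P_0>0$. A reflection matrix is $\mathbf\Phi=\mathrm{diag}(\mathbf v)$ with $\mathbf v\in\mathbb C^N$, $|v_n|=1$ for all $n$. For a given $\mathbf\Phi$ put $\mathbf h_k=\mathbf h_{\mathrm d,k}+\mathbf G^H\mathbf\Phi^H\mathbf h_{\mathrm r,k}$ and $\mathbf H_k=\mathbf h_k\mathbf h_k^H$. For $\mathbf w_1,\dots,\mathbf w_K\in\mathbb C^M$ the Type-II SINR of user $k$ is $$\gamma_k^{\mathrm{II}}=\frac{|\mathbf h_k^H\mathbf w_k|^2}{\sum_{i\ne k}|\mathbf h_k^H\mathbf w_i|^2+\sigma_k^2},$$ and the power constraint is $\sum_{k}\|\mathbf w_k\|^2+\mathrm{tr}(\mathbf R_0)\le P_0$. For Hermitian $\mathbf X\succeq\mathbf 0$ define $f(\mathbf X)=\mathrm{tr}\big((\mathbf G\mathbf X\mathbf G^H)^{-1}\big)$ if $\mathbf G\mathbf X\mathbf G^H$ is invertible and $f(\mathbf X)=+\infty$ otherwise. Problem (P2.1) (for fixed $\mathbf\Phi$): minimize $f\big(\sum_k\mathbf w_k\mathbf w_k^H+\mathbf R_0\big)$ over $\mathbf w_k\in\mathbb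 C^M$ and Hermitian $\mathbf R_0\succeq\mathbf 0$, subject to $\gamma_k^{\mathrm{II}}\ge\Gamma_k$ for all $k$ and the power constraint. Problem (SDR2.1) (for fixed $\mathbf\Phi$): minimize $f\big(\sum_k\mathbf W_k+\mathbf R_0\big)$ over Hermitian $\mathbf W_k\succeq\mathbf 0$ ($k\in\mathcal K$) and $\mathbf R_0\succeq\mathbf 0$, subject to $\tfrac1{\Gamma_k}\mathrm{tr}(\mathbf H_k\mathbf W_k)-\sum_{i\ne k}\mathrm{tr}(\mathbf H_k\mathbf W_i)\ge\sigma_k^2$ for all $k$, and $\sum_k\mathrm{tr}(\mathbf W_k)+\mathrm{tr}(\mathbf R_0)\le P_0$. *)

theory Defs
  imports "HOL-Analysis.Analysis"
begin

text \<open>Complex matrices are represented as complex^'c^'r (rows indexed by 'r,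
columns by 'c), complex vectors as complex^'n.\<close>

definition cadj :: "complex^'c^'r \<Rightarrow> complex^'r^'c" where
  "cadj A = (\<chi> i j. cnj (A $ j $ i))"

definition cvadj :: "complex^'n \<Rightarrow> complex^'n" where
  "cvadj x = (\<chi> i. cnj (x $ i))"

definition cinner :: "complex^'n \<Rightarrow> complex^'n \<Rightarrow> complex" where
  "cinner x y = (\<Sum>i\<in>UNIV. cnj (x $ i) * y $ i)"

definition cnorm2 :: "complex^'n \<Rightarrow> real" where
  "cnorm2 x = (\<Sum>i\<in>UNIV. (cmod (x $ i))^2)"

definition outer :: "complex^'n \<Rightarrow> complex^'n^'n" where
  "outer w = (\<chi> i j. w $ i * cnj (w $ j))"

definition hermitian :: "complex^'n^'n \<Rightarrow> bool" where
  "hermitian X \<longleftrightarrow> cadj X = X"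

definition psd :: "complex^'n^'n \<Rightarrow> bool" where
  "psd X \<longleftrightarrow> hermitian X \<and> (\<forall>x. 0 \<le> Re (cinner x (X *v x)))"

definition diagm :: "complex^'n \<Rightarrow> complex^'n^'n" where
  "diagm v = (\<chi> i j. if i = j then v $ i else 0)"

definition unimod :: "complex^'n \<Rightarrow> bool" where
  "unimod v \<longleftrightarrow> (\<forall>n. cmod (v $ n) = 1)"

definition heff :: "complex^'m^'n \<Rightarrow> complex^'n \<Rightarrow> complex^'m \<Rightarrow> complex^'n \<Rightarrow> complex^'m" where
  "heff G v hdk hrk = hdk + (cadj G ** cadj (diagm v)) *v hrk"

text \<open>Objective f(X) = tr((G X G^H)^{-1}) if invertible, +infinity otherwise.
For Hermitian PSD X and invertible G X G^H this trace is real; we take its real part.\<close>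
definition fobj :: "complex^'m^'n \<Rightarrow> complex^'m^'m \<Rightarrow> ereal" where
  "fobj G X = (if invertible (G ** X ** cadj G)
               then ereal (Re (trace (matrix_inv (G ** X ** cadj G)))) else \<infinity>)"

definition sinrII :: "('k::finite \<Rightarrow> complex^'m) \<Rightarrow> ('k \<Rightarrow> real) \<Rightarrow> ('k \<Rightarrow> complex^'m) \<Rightarrow> 'k \<Rightarrow> real" where
  "sinrII h \<sigma>2 w k = (cmod (cinner (h k) (w k)))^2 /
      ((\<Sum>i\<in>UNIV - {k}. (cmod (cinner (h k) (w i)))^2) + \<sigma>2 k)"

definition feasP21 ::
  "('k::finite \<Rightarrow> complex^'m) \<Rightarrow> ('k \<Rightarrow> real) \<Rightarrow> ('k \<Rightarrow> real) \<Rightarrow> real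
   \<Rightarrow> ('k \<Rightarrow> complex^'m) \<Rightarrow> complex^'m^'m \<Rightarrow> bool" where
  "feasP21 h \<Gamma> \<sigma>2 P0 w R0 \<longleftrightarrow>
     psd R0 \<and> (\<forall>k. sinrII h \<sigma>2 w k \<ge> \<Gamma> k) \<and>
     (\<Sum>k\<in>UNIV. cnorm2 (w k)) + Re (trace R0) \<le> P0"

definition objP21 :: "complex^'m^'n \<Rightarrow> ('k::finite \<Rightarrow> complex^'m) \<Rightarrow> complex^'m^'m \<Rightarrow> ereal" where
  "objP21 G w R0 = fobj G ((\<Sum>k\<in>UNIV. outer (w k)) + R0)"

text \<open>Feasible set of (SDR2.1).  The traces below are real for PSD arguments;
the constraints are imposed on their real parts.\<close>
definition feasSDR ::
  "('k::finite \<Rightarrow> complex^'m) \<Rightarrow> ('k \<Rightarrow> real) \<Rightarrow> ('k \<Rightarrow> real) \<Rightarrow> real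
   \<Rightarrow> ('k \<Rightarrow> complex^'m^'m) \<Rightarrow> complex^'m^'m \<Rightarrow> bool" where
  "feasSDR h \<Gamma> \<sigma>2 P0 W R0 \<longleftrightarrow>
     (\<forall>k. psd (W k)) \<and> psd R0 \<and>
     (\<forall>k. (1 / \<Gamma> k) * Re (trace (outer (h k) ** W k))
          - (\<Sum>i\<in>UNIV - {k}. Re (trace (outer (h k) ** W i))) \<ge> \<sigma>2 k) \<and>
     (\<Sum>k\<in>UNIV. Re (trace (W k))) + Re (trace R0) \<le> P0"

definition objSDR :: "complex^'m^'n \<Rightarrow> ('k::finite \<Rightarrow> complex^'m^'m) \<Rightarrow> complex^'m^'m \<Rightarrow> ereal" where
  "objSDR G W R0 = fobj G ((\<Sum>k\<in>UNIV. W k) + R0)"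

definition optP21 where
  "optP21 G h \<Gamma> \<sigma>2 P0 w R0 \<longleftrightarrow> feasP21 h \<Gamma> \<sigma>2 P0 w R0 \<and>
     (\<forall>w' R0'. feasP21 h \<Gamma> \<sigma>2 P0 w' R0' \<longrightarrow> objP21 G w R0 \<le> objP21 G w' R0')"

definition optSDR where
  "optSDR G h \<Gamma> \<sigma>2 P0 W R0 \<longleftrightarrow> feasSDR h \<Gamma> \<sigma>2 P0 W R0 \<and>
     (\<forall>W' R0'. feasSDR h \<Gamma> \<sigma>2 P0 W' R0' \<longrightarrow> objSDR G W R0 \<le> objSDR G W' R0')"

definition valP21 where
  "valP21 G h \<Gamma> \<sigma>2 P0 = (INF p\<in>{(w, R0). feasP21 h \<Gamma> \<sigma>2 P0 w R0}. objP21 G (fst p) (snd p))"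

definition valSDR where
  "valSDR G h \<Gamma> \<sigma>2 P0 = (INF p\<in>{(W, R0). feasSDR h \<Gamma> \<sigma>2 P0 W R0}. objSDR G (fst p) (snd p))"

end

theory Submission
  imports Defs
begin

text \<open>For a PSD matrix \<open>W\<close> with \<open>q = h\<^sup>H W h > 0\<close> put
\<open>w = q\<^sup>-\<^sup>1\<^sup>/\<^sup>2 W h\<close>.  Then \<open>h\<^sup>H w w\<^sup>H h = q = h\<^sup>H W h\<close>, and \<open>W - w w\<^sup>H\<close> is PSD by the
Cauchy-Schwarz inequality for the semi-inner product \<open>(x, y) \<mapsto> x\<^sup>H W y\<close>.  Replacing every
\<open>W\<^sub>k\<close> of an optimal SDR solution by \<open>w\<^sub>k w\<^sub>k\<^sup>H\<close> therefore keeps the signal terms, can only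
decrease the interference terms, and the surplus \<open>\<Sum> (W\<^sub>k - w\<^sub>k w\<^sub>k\<^sup>H)\<close> moved into \<open>R\<^sub>0\<close>
leaves both the total covariance (hence the objective) and the power unchanged.  Since every
point of (P2.1) lifts to a point of (SDR2.1) with the same value via \<open>w \<mapsto> w w\<^sup>H\<close>, the
extracted point is optimal for (P2.1).\<close>

lemma cinner_add_left: "cinner (x + y) z = cinner x z + cinner y z"
  by (simp add: cinner_def sum.distrib algebra_simps)

lemma cinner_add_right: "cinner x (y + z) = cinner x y + cinner x z"
  by (simp add: cinner_def sum.distrib algebra_simps)

lemma cinner_diff_right: "cinner x (y - z) = cinner x y - cinner x z"
  by (simp add: cinner_def sum_subtractf algebra_simps)

lemma cinner_scale_left: "cinner (c *s x) y = cnj c * cinner x y"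
  by (simp add: cinner_def sum_distrib_left algebra_simps)

lemma cinner_scale_right: "cinner x (c *s y) = c * cinner x y"
  by (simp add: cinner_def sum_distrib_left algebra_simps)

lemma cinner_commute: "cinner y x = cnj (cinner x y)"
  by (simp add: cinner_def mult.commute)

lemma mult_cnj_eq_cmod_sq: "z * cnj z = (of_real (cmod z))\<^sup>2"
  by (metis complex_norm_square of_real_power)

lemma outer_mult_vec: "outer w *v y = cinner w y *s w"
  by (simp add: outer_def matrix_vector_mult_def cinner_def vec_eq_iff sum_distrib_left
      algebra_simps)

lemma cinner_outer: "cinner x (outer w *v x) = of_real ((cmod (cinner x w))\<^sup>2)"
  by (simp add: outer_mult_vec cinner_scale_right mult_cnj_eq_cmod_sq cinner_commute[of w x]
      mult.commute)

lemma trace_outer: "trace (outer w) = of_real (cnorm2 w)"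
  by (simp add: trace_def outer_def cnorm2_def mult_cnj_eq_cmod_sq)

lemma trace_outer_mult: "trace (outer h ** W) = cinner h (W *v h)"
proof -
  have "trace (outer h ** W) = (\<Sum>i\<in>UNIV. \<Sum>j\<in>UNIV. cnj (h$j) * W$j$i * h$i)"
    by (simp add: trace_def matrix_matrix_mult_def outer_def mult.commute mult.left_commute)
  also have "\<dots> = (\<Sum>j\<in>UNIV. \<Sum>i\<in>UNIV. cnj (h$j) * W$j$i * h$i)"
    by (rule sum.swap)
  also have "\<dots> = cinner h (W *v h)"
    by (simp add: cinner_def matrix_vector_mult_def sum_distrib_left mult.assoc)
  finally show ?thesis .
qed

lemma trace_sum: "finite S \<Longrightarrow> trace (sum f S :: 'a::comm_semiring_1^'n^'n) = (\<Sum>k\<in>S. trace (f k))"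
  by (induction S rule: finite_induct) (auto simp: trace_add trace_def sum.distrib)

lemma hermitian_cinner_swap:
  assumes "hermitian A"
  shows "cinner y (A *v x) = cnj (cinner x (A *v y))"
proof -
  have A: "\<And>i j. cnj (A $ j $ i) = A $ i $ j"
    using assms unfolding hermitian_def cadj_def by (metis vec_lambda_beta)
  have "cinner y (A *v x) = (\<Sum>i\<in>UNIV. \<Sum>j\<in>UNIV. cnj (y$i) * A$i$j * x$j)"
    by (simp add: cinner_def matrix_vector_mult_def sum_distrib_left mult.assoc)
  also have "\<dots> = (\<Sum>j\<in>UNIV. \<Sum>i\<in>UNIV. cnj (y$i) * A$i$j * x$j)"
    by (rule sum.swap)
  also have "\<dots> = (\<Sum>j\<in>UNIV. x$j * (\<Sum>i\<in>UNIV. cnj (A$j$i) * cnj (y$i)))"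
    by (simp add: A sum_distrib_left mult.commute mult.left_commute)
  also have "\<dots> = cnj (cinner x (A *v y))"
    by (simp add: cinner_def matrix_vector_mult_def)
  finally show ?thesis .
qed

lemma psd_outer: "psd (outer w)"
  unfolding psd_def hermitian_def by (simp add: cinner_outer) (simp add: cadj_def outer_def vec_eq_iff)

lemma psd_add: "psd A \<Longrightarrow> psd B \<Longrightarrow> psd (A + B)"
  unfolding psd_def hermitian_def
  by (simp add: cadj_def vec_eq_iff matrix_vector_mult_add_rdistrib cinner_add_right)

lemma psd_sum: "finite S \<Longrightarrow> (\<And>k. k \<in> S \<Longrightarrow> psd (f k)) \<Longrightarrow> psd (sum f S)"
proof (induction S rule: finite_induct)
  case empty
  show ?case
    unfolding psd_def hermitian_def by (simp add: cadj_def vec_eq_iff cinner_def)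
qed (simp add: psd_add)

lemma psd_cinner_real:
  assumes "psd A"
  shows "cinner x (A *v x) = of_real (Re (cinner x (A *v x)))"
proof -
  have "cinner x (A *v x) = cnj (cinner x (A *v x))"
    using assms hermitian_cinner_swap[of A x x] unfolding psd_def by blast
  then show ?thesis
    by (metis Reals_cnj_iff complex_is_Real_iff of_real_Re)
qed

lemma psd_cauchy_schwarz:
  assumes "psd W" and pos: "Re (cinner y (W *v y)) > 0"
  shows "(cmod (cinner x (W *v y)))\<^sup>2 \<le> Re (cinner x (W *v x)) * Re (cinner y (W *v y))"
proof -
  define a where "a = Re (cinner x (W *v x))"
  define b where "b = cinner x (W *v y)"
  define c where "c = Re (cinner y (W *v y))"
  define z where "z = - cnj b / of_real c"
  have xx: "cinner x (W *v x) = of_real a"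
    unfolding a_def by (rule psd_cinner_real[OF assms(1)])
  have yy: "cinner y (W *v y) = of_real c"
    unfolding c_def by (rule psd_cinner_real[OF assms(1)])
  have yx: "cinner y (W *v x) = cnj b"
    unfolding b_def using assms(1) psd_def hermitian_cinner_swap by blast
  have bb: "b * cnj b = of_real ((cmod b)\<^sup>2)"
    by (simp add: mult_cnj_eq_cmod_sq)
  \<comment> \<open>expand \<open>(x + z y)\<^sup>H W (x + z y) \<ge> 0\<close> at the minimizing \<open>z\<close>\<close>
  have "cinner (x + z *s y) (W *v (x + z *s y))
      = of_real a + z * b + cnj z * cnj b + cnj z * z * of_real c"
    by (simp add: matrix_vector_right_distrib vector_scalar_commute cinner_add_left
        cinner_add_right cinner_scale_left cinner_scale_right xx yy yx b_def[symmetric]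
        algebra_simps)
  also have "\<dots> = of_real (a - (cmod b)\<^sup>2 / c)"
    using bb pos unfolding z_def c_def[symmetric]
    by (simp add: field_simps power2_eq_square)
  finally have "0 \<le> a - (cmod b)\<^sup>2 / c"
    using assms(1) unfolding psd_def by (metis Re_complex_of_real)
  then show ?thesis
    using pos unfolding a_def b_def c_def by (simp add: pos_divide_le_eq)
qed

lemma psd_diff_outer_cinner_le:
  assumes "psd (W - outer w)"
  shows "(cmod (cinner x w))\<^sup>2 \<le> Re (cinner x (W *v x))"
  using assms unfolding psd_def
  by (metis cinner_diff_right cinner_outer matrix_vector_mult_diff_rdistrib diff_ge_0_iff_ge
      minus_complex.sel(1) Re_complex_of_real)

definition rank_one_beam :: "complex^'m \<Rightarrow> complex^'m^'m \<Rightarrow> complex^'m" where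
  "rank_one_beam h W = complex_of_real (1 / sqrt (Re (cinner h (W *v h)))) *s (W *v h)"

lemma cinner_rank_one_beam:
  assumes "psd W" and "Re (cinner h (W *v h)) > 0"
  shows "(cmod (cinner h (rank_one_beam h W)))\<^sup>2 = Re (cinner h (W *v h))"
proof -
  define q where "q = Re (cinner h (W *v h))"
  have "cinner h (rank_one_beam h W) = of_real (1 / sqrt q * q)"
    unfolding rank_one_beam_def cinner_scale_right q_def
    by (subst psd_cinner_real[OF assms(1)]) simp
  also have "1 / sqrt q * q = sqrt q"
    using assms(2) unfolding q_def[symmetric] by (simp add: real_div_sqrt)
  finally show ?thesis
    using assms(2) unfolding q_def by simp
qed

lemma psd_diff_outer_rank_one_beam:
  assumes "psd W" and pos: "Re (cinner h (W *v h)) > 0"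
  shows "psd (W - outer (rank_one_beam h W))"
proof -
  let ?q = "Re (cinner h (W *v h))"
  have "hermitian (W - outer (rank_one_beam h W))"
    using assms(1) unfolding psd_def hermitian_def by (simp add: cadj_def outer_def vec_eq_iff)
  moreover have "0 \<le> Re (cinner x ((W - outer (rank_one_beam h W)) *v x))" for x
  proof -
    have "(cmod (cinner x (rank_one_beam h W)))\<^sup>2 = (cmod (cinner x (W *v h)))\<^sup>2 / ?q"
      using pos by (simp add: rank_one_beam_def cinner_scale_right norm_divide power_divide)
    also have "\<dots> \<le> Re (cinner x (W *v x))"
      using psd_cauchy_schwarz[OF assms, of x] pos by (simp add: pos_divide_le_eq)
    finally show ?thesis
      by (simp add: matrix_vector_mult_diff_rdistrib cinner_diff_right cinner_outer)
  qed
  ultimately show ?thesis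
    unfolding psd_def by blast
qed

lemma sinr_threshold_iff:
  fixes \<Gamma> \<sigma> S I :: real
  assumes "\<Gamma> > 0" "\<sigma> > 0" "I \<ge> 0"
  shows "\<Gamma> \<le> S / (I + \<sigma>) \<longleftrightarrow> \<sigma> \<le> (1 / \<Gamma>) * S - I"
  using assms by (simp add: pos_le_divide_eq field_simps)

lemma feasP21_iff_feasSDR_outer:
  assumes "\<forall>k. \<Gamma> k > 0" and "\<forall>k. \<sigma>2 k > 0"
  shows "feasP21 h \<Gamma> \<sigma>2 P0 w R0 \<longleftrightarrow> feasSDR h \<Gamma> \<sigma>2 P0 (\<lambda>k. outer (w k)) R0"
proof -
  have "\<Gamma> k \<le> sinrII h \<sigma>2 w k \<longleftrightarrow>
        \<sigma>2 k \<le> (1 / \<Gamma> k) * Re (trace (outer (h k) ** outer (w k)))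
               - (\<Sum>i\<in>UNIV - {k}. Re (trace (outer (h k) ** outer (w i))))" for k
    unfolding sinrII_def trace_outer_mult cinner_outer Re_complex_of_real
    using assms by (intro sinr_threshold_iff) (auto intro: sum_nonneg)
  then show ?thesis
    unfolding feasP21_def feasSDR_def by (simp add: psd_outer trace_outer)
qed

lemma feasSDR_signal_pos:
  assumes "\<forall>k. \<Gamma> k > 0" and "\<forall>k. \<sigma>2 k > 0" and feas: "feasSDR h \<Gamma> \<sigma>2 P0 W R0"
  shows "Re (cinner (h k) (W k *v h k)) > 0"
proof -
  have "0 \<le> (\<Sum>i\<in>UNIV - {k}. Re (trace (outer (h k) ** W i)))"
    using feas by (auto simp: feasSDR_def psd_def trace_outer_mult intro: sum_nonneg)
  moreover have "\<sigma>2 k \<le> (1 / \<Gamma> k) * Re (trace (outer (h k) ** W k))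
      - (\<Sum>i\<in>UNIV - {k}. Re (trace (outer (h k) ** W i)))"
    using feas unfolding feasSDR_def by blast
  ultimately have "0 < (1 / \<Gamma> k) * Re (trace (outer (h k) ** W k))"
    using assms(2) by (smt (verit))
  then show ?thesis
    using assms(1)[rule_format, of k] by (simp add: trace_outer_mult zero_less_divide_iff)
qed

lemma feasSDR_rank_one_extraction:
  fixes W :: "'k::finite \<Rightarrow> complex^'m^'m"
  assumes "\<forall>k. \<Gamma> k > 0" and "\<forall>k. \<sigma>2 k > 0" and feas: "feasSDR h \<Gamma> \<sigma>2 P0 W R0"
  defines "w \<equiv> \<lambda>k. rank_one_beam (h k) (W k)"
  shows "feasSDR h \<Gamma> \<sigma>2 P0 (\<lambda>k. outer (w k)) (R0 + (\<Sum>k\<in>UNIV. W k) - (\<Sum>k\<in>UNIV. outer (w k)))"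
proof -
  let ?T = "\<lambda>k V. Re (trace (outer (h k) ** V))"
  have W: "\<And>k. psd (W k)" and "psd R0"
    and sinr: "\<And>k. (1 / \<Gamma> k) * ?T k (W k) - (\<Sum>i\<in>UNIV - {k}. ?T k (W i)) \<ge> \<sigma>2 k"
    and power: "(\<Sum>k\<in>UNIV. Re (trace (W k))) + Re (trace R0) \<le> P0"
    using feas unfolding feasSDR_def by auto
  have pos: "\<And>k. Re (cinner (h k) (W k *v h k)) > 0"
    using feasSDR_signal_pos[OF assms(1,2) feas] .
  have surplus: "\<And>k. psd (W k - outer (w k))"
    unfolding w_def using psd_diff_outer_rank_one_beam[OF W pos] .
  have "R0 + (\<Sum>k\<in>UNIV. W k) - (\<Sum>k\<in>UNIV. outer (w k)) = R0 + (\<Sum>k\<in>UNIV. W k - outer (w k))"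
    by (simp add: sum_subtractf add_diff_eq)
  moreover have "psd (R0 + (\<Sum>k\<in>UNIV. W k - outer (w k)))"
    using \<open>psd R0\<close> surplus by (auto intro!: psd_add psd_sum)
  ultimately have psd_R: "psd (R0 + (\<Sum>k\<in>UNIV. W k) - (\<Sum>k\<in>UNIV. outer (w k)))"
    by (simp only:)
  have signal: "?T k (outer (w k)) = ?T k (W k)" for k
    using cinner_rank_one_beam[OF W pos] by (simp add: w_def trace_outer_mult cinner_outer)
  have interference: "?T k (outer (w i)) \<le> ?T k (W i)" for k i
    using psd_diff_outer_cinner_le[OF surplus] by (simp add: trace_outer_mult cinner_outer)
  have "(1 / \<Gamma> k) * ?T k (outer (w k)) - (\<Sum>i\<in>UNIV - {k}. ?T k (outer (w i))) \<ge> \<sigma>2 k" for k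
  proof -
    have "(\<Sum>i\<in>UNIV - {k}. ?T k (outer (w i))) \<le> (\<Sum>i\<in>UNIV - {k}. ?T k (W i))"
      by (rule sum_mono) (rule interference)
    then show ?thesis
      using sinr[of k] by (simp add: signal)
  qed
  with W psd_R power show ?thesis
    unfolding feasSDR_def by (simp add: psd_outer trace_add trace_sub trace_sum)
qed

lemma optP21_if_attains_optSDR:
  assumes "\<forall>k. \<Gamma> k > 0" and "\<forall>k. \<sigma>2 k > 0"
    and opt: "optSDR G h \<Gamma> \<sigma>2 P0 W R0"
    and feas: "feasP21 h \<Gamma> \<sigma>2 P0 w R"
    and obj: "objP21 G w R = objSDR G W R0"
  shows "optP21 G h \<Gamma> \<sigma>2 P0 w R \<and> valP21 G h \<Gamma> \<sigma>2 P0 = valSDR G h \<Gamma> \<sigma>2 P0"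
proof -
  have lift: "objSDR G W R0 \<le> objP21 G w' R'" if "feasP21 h \<Gamma> \<sigma>2 P0 w' R'" for w' R'
    using opt that feasP21_iff_feasSDR_outer[OF assms(1,2)]
    unfolding optSDR_def objSDR_def objP21_def by blast
  have "valSDR G h \<Gamma> \<sigma>2 P0 = objSDR G W R0"
    unfolding valSDR_def using opt unfolding optSDR_def
    by (intro cInf_eq_minimum) (auto intro: rev_image_eqI[of "(W, R0)"])
  moreover have "valP21 G h \<Gamma> \<sigma>2 P0 = objP21 G w R"
    unfolding valP21_def using feas lift obj
    by (intro cInf_eq_minimum) (auto intro: rev_image_eqI[of "(w, R)"])
  ultimately show ?thesis
    unfolding optP21_def using feas lift obj by simp
qed

theorem proposition3:
  fixes G :: "complex^'m^'n"
    and hdir :: "'k::finite \<Rightarrow> complex^'m"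
    and hris :: "'k \<Rightarrow> complex^'n"
    and \<Gamma> \<sigma>2 :: "'k \<Rightarrow> real"
    and P0 :: real
    and v :: "complex^'n"
    and W :: "'k \<Rightarrow> complex^'m^'m"
    and R0 :: "complex^'m^'m"
  assumes "\<forall>k. \<Gamma> k > 0" and "\<forall>k. \<sigma>2 k > 0" and "P0 > 0"
    and "unimod v"
    and opt: "optSDR G (\<lambda>k. heff G v (hdir k) (hris k)) \<Gamma> \<sigma>2 P0 W R0"
  shows "let h = (\<lambda>k. heff G v (hdir k) (hris k));
             q = (\<lambda>k. cinner (h k) (W k *v h k));
             w = (\<lambda>k. complex_of_real (1 / sqrt (Re (q k))) *s (W k *v h k));
             R = R0 + (\<Sum>k\<in>UNIV. W k) - (\<Sum>k\<in>UNIV. outer (w k))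
         in (\<forall>k. Im (q k) = 0 \<and> Re (q k) > 0) \<and> psd R \<and>
            optP21 G h \<Gamma> \<sigma>2 P0 w R \<and>
            valP21 G h \<Gamma> \<sigma>2 P0 = valSDR G h \<Gamma> \<sigma>2 P0"
proof -
  define h where "h = (\<lambda>k. heff G v (hdir k) (hris k))"
  define w where "w = (\<lambda>k. rank_one_beam (h k) (W k))"
  define R where "R = R0 + (\<Sum>k\<in>UNIV. W k) - (\<Sum>k\<in>UNIV. outer (w k))"
  have opt_h: "optSDR G h \<Gamma> \<sigma>2 P0 W R0"
    using opt unfolding h_def .
  then have feas: "feasSDR h \<Gamma> \<sigma>2 P0 W R0"
    unfolding optSDR_def by blast
  have signal: "Im (cinner (h k) (W k *v h k)) = 0 \<and> Re (cinner (h k) (W k *v h k)) > 0" for k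
    using feas psd_cinner_real feasSDR_signal_pos[OF assms(1,2) feas]
    unfolding feasSDR_def by (metis Im_complex_of_real)
  have extracted: "feasSDR h \<Gamma> \<sigma>2 P0 (\<lambda>k. outer (w k)) R"
    unfolding w_def R_def by (rule feasSDR_rank_one_extraction[OF assms(1,2) feas])
  have "objP21 G w R = objSDR G W R0"
    unfolding objP21_def objSDR_def R_def by (simp add: algebra_simps)
  then have "optP21 G h \<Gamma> \<sigma>2 P0 w R \<and> valP21 G h \<Gamma> \<sigma>2 P0 = valSDR G h \<Gamma> \<sigma>2 P0"
    using extracted feasP21_iff_feasSDR_outer[OF assms(1,2)]
    by (intro optP21_if_attains_optSDR[OF assms(1,2) opt_h]) auto
  moreover have "psd R"
    using extracted unfolding feasSDR_def by blast
  ultimately show ?thesis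
    using signal unfolding Let_def w_def R_def h_def rank_one_beam_def by simp
qed

end
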